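(* Let $B=(B,+,0)$ be a unitary magma and $(X,\varphi)$ a $B$-action. The set $$X\rtimes_\varphi B=\{(x,b)\in X\times B\mid \varphi(x,0,0,b)=x\}$$ is closed under the binary operation on $X\times B$ given by $(x,b)+(x',b')=(\varphi(x,b,x',b'),\,b+b')$, and $(X\rtimes_\varphi B,+,(0,0))$ is a unitary magma.
   Context: A unitary magma is a set with a binary operation $+$ and an element $0$ with $b+0=b=0+b$ for all $b$. A $B$-action is a pair $(X,\varphi)$ with $X$ a set and $\varphi\colon X\times B\times X\times B\to X$ a map such that: (1) there is an element $0\in X$ with $\varphi(x,0,0,0)=x=\varphi(0,0,x,0)$ for all $x\in X$; (2) $\varphi(x,b,0,0)=\varphi(x,0,0,b)=\varphi(0,0,x,b)$ for all $x\in X,b\in B$; (3) $\varphi(0,b,0,b')=0$ for all $b,b'\in B$; (4) writing $\varphi_{00}(x,b)=\varphi(x,0,0,b)$, for all $x,x'\in X$, $b,b'\in B$: $\varphi(x,b,x',b')=\varphi_{00}\big(\varphi(\varphi_{00}(x,b),b,\varphi_{00}(x',b'),b'),\,b+b'\big)$. *)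

theory Defs
  imports Main
begin

definition unitary_magma :: "'a set \<Rightarrow> ('a \<Rightarrow> 'a \<Rightarrow> 'a) \<Rightarrow> 'a \<Rightarrow> bool" where
  "unitary_magma S f e \<longleftrightarrow> (\<forall>a\<in>S. \<forall>b\<in>S. f a b \<in> S) \<and> e \<in> S \<and>
     (\<forall>b\<in>S. f b e = b \<and> f e b = b)"

text \<open>A B-action on a set X with distinguished element z (the 0 of X);
  the unitary magma B is (SB, add, zB).\<close>
definition B_action :: "'b set \<Rightarrow> ('b \<Rightarrow> 'b \<Rightarrow> 'b) \<Rightarrow> 'b \<Rightarrow>
    'x set \<Rightarrow> 'x \<Rightarrow> ('x \<Rightarrow> 'b \<Rightarrow> 'x \<Rightarrow> 'b \<Rightarrow> 'x) \<Rightarrow> bool" where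
  "B_action SB add zB X z phi \<longleftrightarrow>
     z \<in> X \<and>
     (\<forall>x\<in>X. \<forall>b\<in>SB. \<forall>x'\<in>X. \<forall>b'\<in>SB. phi x b x' b' \<in> X) \<and>
     (\<forall>x\<in>X. phi x zB z zB = x \<and> phi z zB x zB = x) \<and>
     (\<forall>x\<in>X. \<forall>b\<in>SB. phi x b z zB = phi x zB z b \<and> phi x zB z b = phi z zB x b) \<and>
     (\<forall>b\<in>SB. \<forall>b'\<in>SB. phi z b z b' = z) \<and>
     (\<forall>x\<in>X. \<forall>x'\<in>X. \<forall>b\<in>SB. \<forall>b'\<in>SB.
        phi x b x' b' = phi (phi (phi x zB z b) b (phi x' zB z b') b') zB z (add b b'))"

definition semidirect_carrier :: "'b \<Rightarrow> 'x set \<Rightarrow> 'b set \<Rightarrow> 'x \<Rightarrow>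
    ('x \<Rightarrow> 'b \<Rightarrow> 'x \<Rightarrow> 'b \<Rightarrow> 'x) \<Rightarrow> ('x \<times> 'b) set" where
  "semidirect_carrier zB X SB z phi = {(x, b) \<in> X \<times> SB. phi x zB z b = x}"

definition semidirect_op :: "('b \<Rightarrow> 'b \<Rightarrow> 'b) \<Rightarrow> ('x \<Rightarrow> 'b \<Rightarrow> 'x \<Rightarrow> 'b \<Rightarrow> 'x) \<Rightarrow>
    'x \<times> 'b \<Rightarrow> 'x \<times> 'b \<Rightarrow> 'x \<times> 'b" where
  "semidirect_op add phi p q = (phi (fst p) (snd p) (fst q) (snd q), add (snd p) (snd q))"

end

theory Submission
  imports Defs
begin

lemma semidirect_op_closed:
  assumes "unitary_magma SB add zB" and "B_action SB add zB X z phi"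
    and "p \<in> semidirect_carrier zB X SB z phi" and "q \<in> semidirect_carrier zB X SB z phi"
  shows "semidirect_op add phi p q \<in> semidirect_carrier zB X SB z phi"
proof -
  obtain x b x' b' where p: "p = (x, b)" and q: "q = (x', b')" by fastforce
  have mem: "x \<in> X" "b \<in> SB" "x' \<in> X" "b' \<in> SB"
    and fixed: "phi x zB z b = x" "phi x' zB z b' = x'"
    using assms(3,4) by (auto simp: p q semidirect_carrier_def)
  have "phi x b x' b' \<in> X" "add b b' \<in> SB"
    using assms(1,2) mem unfolding B_action_def unitary_magma_def by blast+
  moreover have "phi (phi x b x' b') zB z (add b b') = phi x b x' b'"
    \<comment> \<open>axiom (4), in which both inner applications of \<open>\<phi>\<^sub>0\<^sub>0\<close> are trivial by \<open>fixed\<close>\<close>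
    using assms(2) mem fixed unfolding B_action_def by metis
  ultimately show ?thesis
    by (simp add: p q semidirect_op_def semidirect_carrier_def)
qed

lemma semidirect_unit_mem:
  assumes "unitary_magma SB add zB" and "B_action SB add zB X z phi"
  shows "(z, zB) \<in> semidirect_carrier zB X SB z phi"
  using assms unfolding unitary_magma_def B_action_def semidirect_carrier_def by blast

lemma semidirect_op_unit:
  assumes "unitary_magma SB add zB" and "B_action SB add zB X z phi"
    and "p \<in> semidirect_carrier zB X SB z phi"
  shows "semidirect_op add phi p (z, zB) = p" and "semidirect_op add phi (z, zB) p = p"
proof -
  obtain x b where p: "p = (x, b)" by fastforce
  have mem: "x \<in> X" "b \<in> SB" and fixed: "phi x zB z b = x"
    using assms(3) by (auto simp: p semidirect_carrier_def)
  have "phi x b z zB = x" "phi z zB x b = x"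
    using assms(2) mem fixed unfolding B_action_def by metis+
  moreover have "add b zB = b" "add zB b = b"
    using assms(1) mem unfolding unitary_magma_def by blast+
  ultimately show "semidirect_op add phi p (z, zB) = p" "semidirect_op add phi (z, zB) p = p"
    by (simp_all add: p semidirect_op_def)
qed

theorem proposition3p2:
  fixes SB :: "'b set" and add :: "'b \<Rightarrow> 'b \<Rightarrow> 'b" and zB :: 'b
    and X :: "'x set" and z :: 'x and phi :: "'x \<Rightarrow> 'b \<Rightarrow> 'x \<Rightarrow> 'b \<Rightarrow> 'x"
  assumes "unitary_magma SB add zB"
    and "B_action SB add zB X z phi"
  shows "(\<forall>p\<in>semidirect_carrier zB X SB z phi. \<forall>q\<in>semidirect_carrier zB X SB z phi.
            semidirect_op add phi p q \<in> semidirect_carrier zB X SB z phi)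
         \<and> unitary_magma (semidirect_carrier zB X SB z phi) (semidirect_op add phi) (z, zB)"
  using semidirect_op_closed[OF assms] semidirect_unit_mem[OF assms] semidirect_op_unit[OF assms]
  unfolding unitary_magma_def by blast

end
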